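(* Let $\mathcal A=(Q,\Sigma,\delta,\rho)$ be a connected bireversible Mealy automaton whose labeled orbit tree $\mathfrak t(\mathcal A)$ has no active self-liftable branch, and let $\mathfrak j$ be a jungle tree with trunk of length $n$. For a $\mathfrak j$-word $\mathbf u$ with $|\mathbf u|<n$ and a $\sim$-class $\gamma$ of stems, let $M(\mathbf u,\gamma)$ be the number of stems in $\gamma$ with prefix $\mathbf u$. Then $M(\mathbf u,\gamma)$ is either $0$ or depends only on $|\mathbf u|$: if $M(\mathbf u,\gamma)\ne0$, $M(\mathbf u',\gamma')\neq 0$ and $|\mathbf u|=|\mathbf u'|$, then $M(\mathbf u,\gamma)=M(\mathbf u',\gamma')$.
   Context: Mealy automata. A Mealy automaton is $\mathcal A=(Q,\Sigma,\delta,\rho)$ with $Q,\Sigma$ finite non-empty sets, $\delta=(\delta_i\colon Q\to Q)_{i\in\Sigma}$, $\rho=(\rho_x\colon\Sigma\to\Sigma)_{x\in Q}$; transitions $x\xrightarrow{i\mid\rho_x(i)}\delta_i(x)$. Invertible: each $\rho_x$ a permutation of $\Sigma$; reversible: each $\delta_i$ a permutation of $Q$; bireversible: invertible, reversible, and for each $j\in\Sigma$ the map $x\mapsto\delta_{\rho_x^{-1}(j)}(x)$ is a permutation of $Q$. Connected: the directed graph on $Q$ with edges $x\to\delta_i(x)$ is connected. Extensions: $\rho_x(i\mathbf s)=\rho_x(i)\rho_{\delta_i(x)}(\mathbf s)$; $\rho_{x_1\cdots x_m}=\rho_{x_m}\circ\cdots\circ\rho_{x_1}$; $\delta_i(x\mathbf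 u)=\delta_i(x)\delta_{\rho_x(i)}(\mathbf u)$ on $Q^*$, $\delta_{i_1\cdots i_m}=\delta_{i_m}\circ\cdots\circ\delta_{i_1}$. The connected components of $\mathcal A^n$ (stateset $Q^n$, transitions $\mathbf u\xrightarrow{i\mid\rho_{\mathbf u}(i)}\delta_i(\mathbf u)$) are, for reversible $\mathcal A$, the orbits of $Q^n$ under the maps $\delta_{\mathbf s}$. Orbit tree $\mathfrak t(\mathcal A)$: vertices at level $n\ge0$ are the connected components of $\mathcal A^n$; an edge from the component of $\mathbf u\in Q^n$ to that of $\mathbf ux$ for all $\mathbf u,x$; edge $C\to D$ labeled $\#D/\#C$. $\top,\bot$ = first/last vertex of a downward path; level of an edge/path = level of its top vertex. A word of $Q^*\cup Q^\omega$ represents the initial path through the components of its prefixes. Edge $e$ is liftable to $f$ if every word of $\bot(e)$ has a suffix in $\bot(f)$; paths are liftable if corresponding edges are. $f$ is a legitimate child of $e$ if $\top(f)=\bot(e)$ and $f$ is liftable to $e$. A path/subtree $\mathfrak s$ is $k$-self-liftable if for all $i\ge0$ every path in $\mathfrak s$ starting at level $i+k$ is liftable to a path in $\mathfrak s$ starting at level $i$; self-liftable if $k$-self-liftable for some $k>0$. A branch (infinite initial path) is active if its labels are not eventually all $1$. Jungle trees: for a finite 1-self-liftable initial path $\mathbf e$ of length $n$ whose last edge has at least two legitimate children, all labeled $1$, $\mathfrak j(\mathbf e)$ consists of $\mathbf e$ plus all edges descending from $\bot(\mathbf e)$ that are liftable to the last edge of $\mathbf e$. Stems: the words of $\bot(\mathbf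 e)\subseteq Q^n$. A $\mathfrak j$-word is a word representing an initial path of $\mathfrak j$. For stems $\mathbf u,\mathbf v$: $\mathbf u\sim\mathbf v$ iff there is $\mathbf s\in Q^*$ such that $\mathbf{usv}$ is a $\mathfrak j$-word and $\rho_{\mathbf{us}}$ is the identity of $\Sigma^*$; $\sim$ is an equivalence relation. *)

theory Defs
  imports Complex_Main "HOL-Library.Sublist"
begin

text \<open>A Mealy automaton (Q, Sigma, delta, rho) with finite non-empty stateset Q = UNIV :: 'q set
  and alphabet Sigma = UNIV :: 's set.  delta i x is the target of the transition from x
  reading i; rho x i is its output.\<close>

definition invertible :: "('s \<Rightarrow> 'q \<Rightarrow> 'q) \<Rightarrow> ('q \<Rightarrow> 's \<Rightarrow> 's) \<Rightarrow> bool" where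
  "invertible delta rho \<longleftrightarrow> (\<forall>x. bij (rho x))"

definition reversible :: "('s \<Rightarrow> 'q \<Rightarrow> 'q) \<Rightarrow> ('q \<Rightarrow> 's \<Rightarrow> 's) \<Rightarrow> bool" where
  "reversible delta rho \<longleftrightarrow> (\<forall>i. bij (delta i))"

definition bireversible :: "('s \<Rightarrow> 'q \<Rightarrow> 'q) \<Rightarrow> ('q \<Rightarrow> 's \<Rightarrow> 's) \<Rightarrow> bool" where
  "bireversible delta rho \<longleftrightarrow> invertible delta rho \<and> reversible delta rho \<and>
     (\<forall>j. bij (\<lambda>x. delta (inv (rho x) j) x))"

definition connected_automaton :: "('s \<Rightarrow> 'q \<Rightarrow> 'q) \<Rightarrow> ('q \<Rightarrow> 's \<Rightarrow> 's) \<Rightarrow> bool" where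
  "connected_automaton delta rho \<longleftrightarrow>
     (let E = {(x, delta i x) | x i. True} in \<forall>x y. (x, y) \<in> (E \<union> E\<inverse>)\<^sup>*)"

fun rho_word :: "('s \<Rightarrow> 'q \<Rightarrow> 'q) \<Rightarrow> ('q \<Rightarrow> 's \<Rightarrow> 's) \<Rightarrow> 'q \<Rightarrow> 's list \<Rightarrow> 's list" where
  "rho_word delta rho x [] = []"
| "rho_word delta rho x (i # s) = rho x i # rho_word delta rho (delta i x) s"

fun rho_states :: "('s \<Rightarrow> 'q \<Rightarrow> 'q) \<Rightarrow> ('q \<Rightarrow> 's \<Rightarrow> 's) \<Rightarrow> 'q list \<Rightarrow> 's list \<Rightarrow> 's list" where
  "rho_states delta rho [] s = s"
| "rho_states delta rho (x # u) s = rho_states delta rho u (rho_word delta rho x s)"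

fun delta_word :: "('s \<Rightarrow> 'q \<Rightarrow> 'q) \<Rightarrow> ('q \<Rightarrow> 's \<Rightarrow> 's) \<Rightarrow> 's \<Rightarrow> 'q list \<Rightarrow> 'q list" where
  "delta_word delta rho i [] = []"
| "delta_word delta rho i (x # u) = delta i x # delta_word delta rho (rho x i) u"

definition comp :: "('s \<Rightarrow> 'q \<Rightarrow> 'q) \<Rightarrow> ('q \<Rightarrow> 's \<Rightarrow> 's) \<Rightarrow> 'q list \<Rightarrow> 'q list set" where
  "comp delta rho u =
     (let R = {(v, delta_word delta rho i v) | v i. True} in {v. (u, v) \<in> (R \<union> R\<inverse>)\<^sup>*})"

text \<open>Vertices of the orbit tree: the connected components of all A^n.\<close>
definition is_vertex :: "('s \<Rightarrow> 'q \<Rightarrow> 'q) \<Rightarrow> ('q \<Rightarrow> 's \<Rightarrow> 's) \<Rightarrow> 'q list set \<Rightarrow> bool" where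
  "is_vertex delta rho C \<longleftrightarrow> (\<exists>u. C = comp delta rho u)"

definition lev :: "'q list set \<Rightarrow> nat" where
  "lev C = length (SOME w. w \<in> C)"

text \<open>Edges of the orbit tree are identified with their bottom vertex, which is any vertex
  at level \<ge> 1; the top vertex of the edge is the component of the prefixes of length n-1.\<close>
definition is_edge :: "('s \<Rightarrow> 'q \<Rightarrow> 'q) \<Rightarrow> ('q \<Rightarrow> 's \<Rightarrow> 's) \<Rightarrow> 'q list set \<Rightarrow> bool" where
  "is_edge delta rho D \<longleftrightarrow> is_vertex delta rho D \<and> [] \<notin> D"

definition top_of :: "('s \<Rightarrow> 'q \<Rightarrow> 'q) \<Rightarrow> ('q \<Rightarrow> 's \<Rightarrow> 's) \<Rightarrow> 'q list set \<Rightarrow> 'q list set" where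
  "top_of delta rho D = comp delta rho (butlast (SOME w. w \<in> D))"

definition label :: "('s \<Rightarrow> 'q \<Rightarrow> 'q) \<Rightarrow> ('q \<Rightarrow> 's \<Rightarrow> 's) \<Rightarrow> 'q list set \<Rightarrow> rat" where
  "label delta rho D = of_nat (card D) / of_nat (card (top_of delta rho D))"

definition liftable :: "'q list set \<Rightarrow> 'q list set \<Rightarrow> bool" where
  "liftable D F \<longleftrightarrow> (\<forall>w\<in>D. \<exists>s. suffix s w \<and> s \<in> F)"

text \<open>A (non-empty, finite, downward) path, as the list of its edges, contained in the edge set S,
  starting at level i (the level of its top vertex).\<close>
definition path_in :: "('s \<Rightarrow> 'q \<Rightarrow> 'q) \<Rightarrow> ('q \<Rightarrow> 's \<Rightarrow> 's) \<Rightarrow> 'q list set set \<Rightarrow> nat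
    \<Rightarrow> 'q list set list \<Rightarrow> bool" where
  "path_in delta rho S i ps \<longleftrightarrow> ps \<noteq> [] \<and> set ps \<subseteq> S \<and>
     (\<forall>D\<in>set ps. is_edge delta rho D) \<and>
     (\<forall>t. Suc t < length ps \<longrightarrow> top_of delta rho (ps ! Suc t) = ps ! t) \<and>
     lev (top_of delta rho (hd ps)) = i"

definition liftable_path :: "'q list set list \<Rightarrow> 'q list set list \<Rightarrow> bool" where
  "liftable_path ps qs \<longleftrightarrow> length ps = length qs \<and> (\<forall>t<length ps. liftable (ps ! t) (qs ! t))"

definition k_self_liftable :: "('s \<Rightarrow> 'q \<Rightarrow> 'q) \<Rightarrow> ('q \<Rightarrow> 's \<Rightarrow> 's) \<Rightarrow> nat
    \<Rightarrow> 'q list set set \<Rightarrow> bool" where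
  "k_self_liftable delta rho k S \<longleftrightarrow>
     (\<forall>i ps. path_in delta rho S (i + k) ps \<longrightarrow>
        (\<exists>qs. path_in delta rho S i qs \<and> liftable_path ps qs))"

definition self_liftable :: "('s \<Rightarrow> 'q \<Rightarrow> 'q) \<Rightarrow> ('q \<Rightarrow> 's \<Rightarrow> 's) \<Rightarrow> 'q list set set \<Rightarrow> bool" where
  "self_liftable delta rho S \<longleftrightarrow> (\<exists>k>0. k_self_liftable delta rho k S)"

definition is_branch :: "('s \<Rightarrow> 'q \<Rightarrow> 'q) \<Rightarrow> ('q \<Rightarrow> 's \<Rightarrow> 's) \<Rightarrow> (nat \<Rightarrow> 'q list set) \<Rightarrow> bool" where
  "is_branch delta rho B \<longleftrightarrow> B 0 = comp delta rho [] \<and>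
     (\<forall>n. is_edge delta rho (B (Suc n)) \<and> top_of delta rho (B (Suc n)) = B n)"

definition branch_edges :: "(nat \<Rightarrow> 'q list set) \<Rightarrow> 'q list set set" where
  "branch_edges B = range (\<lambda>n. B (Suc n))"

definition active_branch :: "('s \<Rightarrow> 'q \<Rightarrow> 'q) \<Rightarrow> ('q \<Rightarrow> 's \<Rightarrow> 's) \<Rightarrow> (nat \<Rightarrow> 'q list set) \<Rightarrow> bool" where
  "active_branch delta rho B \<longleftrightarrow> \<not> (\<forall>\<^sub>F n in sequentially. label delta rho (B (Suc n)) = 1)"

definition legitimate_child :: "('s \<Rightarrow> 'q \<Rightarrow> 'q) \<Rightarrow> ('q \<Rightarrow> 's \<Rightarrow> 's) \<Rightarrow> 'q list set
    \<Rightarrow> 'q list set \<Rightarrow> bool" where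
  "legitimate_child delta rho F E \<longleftrightarrow> is_edge delta rho F \<and> top_of delta rho F = E \<and> liftable F E"

definition jungle_trunk :: "('s \<Rightarrow> 'q \<Rightarrow> 'q) \<Rightarrow> ('q \<Rightarrow> 's \<Rightarrow> 's) \<Rightarrow> 'q list set list \<Rightarrow> bool" where
  "jungle_trunk delta rho es \<longleftrightarrow>
     path_in delta rho (set es) 0 es \<and> k_self_liftable delta rho 1 (set es) \<and>
     (\<exists>F1 F2. F1 \<noteq> F2 \<and> legitimate_child delta rho F1 (last es) \<and>
               legitimate_child delta rho F2 (last es)) \<and>
     (\<forall>F. legitimate_child delta rho F (last es) \<longrightarrow> label delta rho F = 1)"

definition descends :: "'q list set \<Rightarrow> 'q list set \<Rightarrow> bool" where
  "descends F C \<longleftrightarrow> (\<exists>w\<in>F. length w > lev C \<and> take (lev C) w \<in> C)"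

definition jungle :: "('s \<Rightarrow> 'q \<Rightarrow> 'q) \<Rightarrow> ('q \<Rightarrow> 's \<Rightarrow> 's) \<Rightarrow> 'q list set list \<Rightarrow> 'q list set set" where
  "jungle delta rho es = set es \<union>
     {F. is_edge delta rho F \<and> descends F (last es) \<and> liftable F (last es)}"

text \<open>A j-word: a finite word representing an initial path of j.\<close>
definition jword :: "('s \<Rightarrow> 'q \<Rightarrow> 'q) \<Rightarrow> ('q \<Rightarrow> 's \<Rightarrow> 's) \<Rightarrow> 'q list set list \<Rightarrow> 'q list \<Rightarrow> bool" where
  "jword delta rho es w \<longleftrightarrow>
     (\<forall>k. 1 \<le> k \<and> k \<le> length w \<longrightarrow> comp delta rho (take k w) \<in> jungle delta rho es)"

definition stems :: "'q list set list \<Rightarrow> 'q list set" where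
  "stems es = last es"

definition stem_rel :: "('s \<Rightarrow> 'q \<Rightarrow> 'q) \<Rightarrow> ('q \<Rightarrow> 's \<Rightarrow> 's) \<Rightarrow> 'q list set list
    \<Rightarrow> ('q list \<times> 'q list) set" where
  "stem_rel delta rho es = {(u, v). u \<in> stems es \<and> v \<in> stems es \<and>
     (\<exists>s. jword delta rho es (u @ s @ v) \<and> (\<forall>t. rho_states delta rho (u @ s) t = t))}"

definition M_count :: "'q list \<Rightarrow> 'q list set \<Rightarrow> nat" where
  "M_count u \<gamma> = card {v \<in> \<gamma>. prefix u v}"

end

theory Submission
  imports Defs
begin

text \<open>For a reversible automaton the components of \<open>\<A>\<^sup>n\<close> are orbits of the group generated
  by the maps \<open>\<delta>\<^sub>s\<close>, and this action preserves both the jungle tree and the relation \<open>\<sim>\<close>.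
  Given stems \<open>v \<in> \<gamma>\<close> and \<open>v' \<in> \<gamma>'\<close> with prefixes \<open>u\<close> and \<open>u'\<close> of equal length, some \<open>\<delta>\<^sub>s\<close>
  maps \<open>v\<close> to \<open>v'\<close>; it then maps \<open>u\<close> to \<open>u'\<close> and injects the stems of \<open>\<gamma>\<close> with prefix \<open>u\<close>
  into the stems of \<open>\<gamma>'\<close> with prefix \<open>u'\<close>. By symmetry the two counts agree.\<close>

definition rho_letter :: "('q \<Rightarrow> 's \<Rightarrow> 's) \<Rightarrow> 'q list \<Rightarrow> 's \<Rightarrow> 's" where
  "rho_letter rho x i = foldl (\<lambda>i q. rho q i) i x"

fun delta_action :: "('s \<Rightarrow> 'q \<Rightarrow> 'q) \<Rightarrow> ('q \<Rightarrow> 's \<Rightarrow> 's) \<Rightarrow> 's list \<Rightarrow> 'q list \<Rightarrow> 'q list" where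
  "delta_action delta rho [] w = w"
| "delta_action delta rho (i # s) w = delta_action delta rho s (delta_word delta rho i w)"

lemma length_delta_word [simp]: "length (delta_word delta rho i w) = length w"
  by (induction w arbitrary: i) auto

lemma length_delta_action [simp]: "length (delta_action delta rho s w) = length w"
  by (induction s arbitrary: w) auto

lemma delta_action_Nil [simp]: "delta_action delta rho s [] = []"
  by (induction s) auto

lemma delta_word_append:
  "delta_word delta rho i (x @ y) = delta_word delta rho i x @ delta_word delta rho (rho_letter rho x i) y"
  by (induction x arbitrary: i) (auto simp: rho_letter_def)

lemma rho_states_Nil [simp]: "rho_states delta rho x [] = []"
  by (induction x) auto

lemma rho_states_Cons:
  "rho_states delta rho x (i # t) = rho_letter rho x i # rho_states delta rho (delta_word delta rho i x) t"
  by (induction x arbitrary: i t) (auto simp: rho_letter_def)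

lemma rho_states_append: "rho_states delta rho (x @ y) t = rho_states delta rho y (rho_states delta rho x t)"
  by (induction x arbitrary: t) auto

lemma delta_action_append:
  "delta_action delta rho s (x @ y) =
     delta_action delta rho s x @ delta_action delta rho (rho_states delta rho x s) y"
  by (induction s arbitrary: x y) (auto simp: delta_word_append rho_states_Cons)

lemma delta_action_append_letters:
  "delta_action delta rho (s @ t) w = delta_action delta rho t (delta_action delta rho s w)"
  by (induction s arbitrary: w) auto

lemma delta_action_replicate:
  "delta_action delta rho (replicate m i) w = (delta_word delta rho i ^^ m) w"
  by (induction m arbitrary: w) (auto simp: funpow_swap1)

lemma take_delta_action: "take k (delta_action delta rho s w) = delta_action delta rho s (take k w)"
proof -
  have "take k (delta_action delta rho s w) =
      take k (delta_action delta rho s (take k w) @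
        delta_action delta rho (rho_states delta rho (take k w) s) (drop k w))"
    by (metis append_take_drop_id delta_action_append)
  also have "\<dots> = delta_action delta rho s (take k w)"
    by (cases "k \<le> length w") (auto simp: min_def)
  finally show ?thesis .
qed

lemma prefix_delta_action:
  assumes "prefix x y"
  shows "prefix (delta_action delta rho s x) (delta_action delta rho s y)"
  using assms by (auto simp: prefix_def delta_action_append)

lemma rho_states_id_delta_action:
  assumes "\<forall>t. rho_states delta rho x t = t"
  shows "\<forall>t. rho_states delta rho (delta_action delta rho s x) t = t"
  using assms
proof (induction s arbitrary: x)
  case (Cons i s)
  have "\<forall>t. rho_states delta rho (delta_word delta rho i x) t = t"
    using Cons.prems[rule_format, of "i # t" for t] by (simp add: rho_states_Cons)
  then show ?case using Cons.IH by simp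
qed simp

lemma inj_delta_word:
  assumes "\<And>i. inj (delta i)"
  shows "inj (delta_word delta rho i)"
proof -
  have "delta_word delta rho i x = delta_word delta rho i y \<Longrightarrow> x = y" for x y
  proof (induction x arbitrary: y i)
    case Nil then show ?case by (cases y) auto
  next
    case (Cons a x) then show ?case using assms by (cases y) (auto dest: injD)
  qed
  then show ?thesis by (rule injI)
qed

lemma inj_delta_action:
  assumes "\<And>i. inj (delta i)"
  shows "inj (delta_action delta rho s)"
proof (induction s)
  case (Cons i s)
  have "delta_action delta rho (i # s) = delta_action delta rho s \<circ> delta_word delta rho i"
    by auto
  moreover have "inj (delta_word delta rho i)"
    using assms by (rule inj_delta_word)
  ultimately show ?case
    using inj_compose[OF Cons.IH] by metis
qed (simp add: inj_on_def)

lemma funpow_length_preserving_returns: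
  fixes f :: "'q::finite list \<Rightarrow> 'q list"
  assumes "inj f" and "\<And>w. length (f w) = length w"
  obtains n where "n > 0" and "(f ^^ n) w = w"
proof (rule funpow_inj_finite[OF assms(1)])
  have "length ((f ^^ n) w) = length w" for n
    using assms(2) by (induction n) auto
  then have "{y. \<exists>n. y = (f ^^ n) w} \<subseteq> {y. length y = length w}"
    by auto
  then show "finite {y. \<exists>n. y = (f ^^ n) w}"
    by (rule finite_subset) (use finite_lists_length_eq[OF finite_UNIV, of "length w"] in simp)
qed

definition transition_rel :: "('s \<Rightarrow> 'q \<Rightarrow> 'q) \<Rightarrow> ('q \<Rightarrow> 's \<Rightarrow> 's) \<Rightarrow> ('q list \<times> 'q list) set" where
  "transition_rel delta rho = {(v, delta_word delta rho i v) | v i. True}"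

lemma comp_conv_rtrancl:
  "comp delta rho u = {v. (u, v) \<in> (transition_rel delta rho \<union> (transition_rel delta rho)\<inverse>)\<^sup>*}"
  by (simp add: comp_def transition_rel_def Let_def)

lemma mem_comp_self: "u \<in> comp delta rho u"
  by (simp add: comp_conv_rtrancl)

lemma delta_action_mem_comp: "delta_action delta rho s u \<in> comp delta rho u"
proof (induction s arbitrary: u)
  case (Cons i s)
  let ?S = "transition_rel delta rho \<union> (transition_rel delta rho)\<inverse>"
  have "(u, delta_word delta rho i u) \<in> ?S"
    by (auto simp: transition_rel_def)
  moreover have "(delta_word delta rho i u, delta_action delta rho (i # s) u) \<in> ?S\<^sup>*"
    using Cons[of "delta_word delta rho i u"] by (simp add: comp_conv_rtrancl)
  ultimately have "(u, delta_action delta rho (i # s) u) \<in> ?S\<^sup>*"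
    by (rule converse_rtrancl_into_rtrancl)
  then show ?case
    by (simp add: comp_conv_rtrancl)
qed (simp add: mem_comp_self)

lemma comp_eq_if_mem:
  assumes "v \<in> comp delta rho u"
  shows "comp delta rho v = comp delta rho u"
proof -
  let ?S = "transition_rel delta rho \<union> (transition_rel delta rho)\<inverse>"
  have "sym (?S\<^sup>*)"
    by (intro sym_rtrancl) (auto simp: sym_def)
  moreover have "(u, v) \<in> ?S\<^sup>*"
    using assms by (simp add: comp_conv_rtrancl)
  ultimately have "(v, u) \<in> ?S\<^sup>*"
    by (meson symD)
  with \<open>(u, v) \<in> ?S\<^sup>*\<close> show ?thesis
    unfolding comp_conv_rtrancl by (auto intro: rtrancl_trans)
qed

lemma comp_delta_action [simp]: "comp delta rho (delta_action delta rho s u) = comp delta rho u"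
  by (rule comp_eq_if_mem) (rule delta_action_mem_comp)

lemma length_mem_comp:
  assumes "v \<in> comp delta rho u"
  shows "length v = length u"
proof -
  have "(u, v) \<in> (transition_rel delta rho \<union> (transition_rel delta rho)\<inverse>)\<^sup>*"
    using assms by (simp add: comp_conv_rtrancl)
  then show ?thesis
    by (induction rule: rtrancl_induct) (auto simp: transition_rel_def)
qed

text \<open>For a reversible automaton the backward transitions are forward ones, since each
  \<open>\<delta>\<^sub>i\<close> has finite order on the words of a given length.\<close>

lemma mem_comp_iff_delta_action:
  fixes delta :: "'s \<Rightarrow> 'q::finite \<Rightarrow> 'q"
  assumes "reversible delta rho"
  shows "v \<in> comp delta rho u \<longleftrightarrow> (\<exists>s. v = delta_action delta rho s u)"
proof
  assume "v \<in> comp delta rho u"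
  then have "(u, v) \<in> (transition_rel delta rho \<union> (transition_rel delta rho)\<inverse>)\<^sup>*"
    by (simp add: comp_conv_rtrancl)
  then show "\<exists>s. v = delta_action delta rho s u"
  proof (induction rule: rtrancl_induct)
    case base
    have "u = delta_action delta rho [] u" by simp
    then show ?case by blast
  next
    case (step v z)
    then obtain s where s: "v = delta_action delta rho s u" by blast
    from step(2) consider i where "z = delta_word delta rho i v" | i where "v = delta_word delta rho i z"
      by (auto simp: transition_rel_def)
    then show ?case
    proof cases
      case (1 i)
      then have "z = delta_action delta rho (s @ [i]) u"
        using s by (simp add: delta_action_append_letters)
      then show ?thesis by blast
    next
      case (2 i)
      let ?f = "delta_word delta rho i"
      have "inj ?f"
        using assms by (intro inj_delta_word) (simp add: reversible_def bij_is_inj)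
      then obtain n where n: "n > 0" "(?f ^^ n) z = z"
        by (rule funpow_length_preserving_returns) simp
      then have "z = (?f ^^ Suc (n - 1)) z"
        by simp
      also have "\<dots> = (?f ^^ (n - 1)) (?f z)"
        by (simp only: funpow_Suc_right o_apply)
      also have "\<dots> = delta_action delta rho (s @ replicate (n - 1) i) u"
        using 2 s by (simp add: delta_action_append_letters delta_action_replicate)
      finally show ?thesis by blast
    qed
  qed
next
  assume "\<exists>s. v = delta_action delta rho s u"
  then show "v \<in> comp delta rho u"
    using delta_action_mem_comp by blast
qed

lemma lev_comp [simp]: "lev (comp delta rho w) = length w"
proof -
  have "(SOME x. x \<in> comp delta rho w) \<in> comp delta rho w"
    using mem_comp_self by (rule someI)
  then show ?thesis
    by (simp add: lev_def length_mem_comp)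
qed

lemma lev_top_of:
  assumes "is_edge delta rho D"
  shows "lev (top_of delta rho D) = lev D - 1"
proof -
  obtain w where D: "D = comp delta rho w"
    using assms by (auto simp: is_edge_def is_vertex_def)
  have "(SOME x. x \<in> D) \<in> D"
    using D mem_comp_self by (metis someI)
  then show ?thesis
    using D by (simp add: top_of_def length_mem_comp)
qed

lemma lev_edge_pos:
  assumes "is_edge delta rho D"
  shows "lev D \<ge> 1"
proof -
  obtain w where D: "D = comp delta rho w"
    using assms by (auto simp: is_edge_def is_vertex_def)
  then have "w \<noteq> []"
    using assms mem_comp_self by (auto simp: is_edge_def)
  then show ?thesis
    using D by (simp add: Suc_le_eq)
qed

lemma lev_nth_initial_path:
  assumes "path_in delta rho S 0 es" and "t < length es"
  shows "lev (es ! t) = Suc t"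
  using assms(2)
proof (induction t)
  case 0
  have "es \<noteq> []" and "is_edge delta rho (es ! 0)" and "lev (top_of delta rho (es ! 0)) = 0"
    using assms(1) 0 by (auto simp: path_in_def hd_conv_nth)
  then show ?case
    using lev_top_of lev_edge_pos by fastforce
next
  case (Suc t)
  have "is_edge delta rho (es ! Suc t)" and "top_of delta rho (es ! Suc t) = es ! t"
    using assms(1) Suc.prems by (auto simp: path_in_def)
  then show ?case
    using lev_top_of lev_edge_pos Suc by fastforce
qed

locale reversible_jungle =
  fixes delta :: "'s \<Rightarrow> 'q::finite \<Rightarrow> 'q" and rho :: "'q \<Rightarrow> 's \<Rightarrow> 's"
    and es :: "'q list set list"
  assumes reversible: "reversible delta rho"
    and trunk: "jungle_trunk delta rho es"
begin

abbreviation "R \<equiv> stem_rel delta rho es"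
abbreviation "act \<equiv> delta_action delta rho"

lemma inj_delta: "inj (delta i)"
  using reversible by (simp add: reversible_def bij_is_inj)

lemma trunk_path: "path_in delta rho (set es) 0 es"
  using trunk by (simp add: jungle_trunk_def)

lemma trunk_nonempty: "es \<noteq> []"
  using trunk_path by (simp add: path_in_def)

lemma length_mem_trunk_edge:
  assumes "D \<in> set es" and "w \<in> D"
  shows "length w \<le> length es"
proof -
  obtain t where t: "t < length es" "D = es ! t"
    using assms(1) by (metis in_set_conv_nth)
  obtain x where x: "D = comp delta rho x"
    using assms(1) trunk_path by (auto simp: path_in_def is_edge_def is_vertex_def)
  have "lev D = Suc t"
    using lev_nth_initial_path[OF trunk_path t(1)] t(2) by simp
  then have "length x = Suc t"
    using x by simp
  then show ?thesis
    using assms(2) x t length_mem_comp by fastforce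
qed

lemma lev_last_trunk: "lev (last es) = length es"
  using lev_nth_initial_path[OF trunk_path, of "length es - 1"] trunk_nonempty
  by (simp add: last_conv_nth)

lemma stems_eq_comp: obtains w0 where "stems es = comp delta rho w0" and "length w0 = length es"
proof -
  have "is_edge delta rho (last es)"
    using trunk_path trunk_nonempty by (simp add: path_in_def)
  then obtain w0 where w0: "last es = comp delta rho w0"
    by (auto simp: is_edge_def is_vertex_def)
  then show ?thesis
    using that lev_last_trunk by (simp add: stems_def)
qed

lemma length_stem: "a \<in> stems es \<Longrightarrow> length a = length es"
  by (metis stems_eq_comp length_mem_comp)

lemma finite_stems: "finite (stems es)"
proof (rule finite_subset)
  show "stems es \<subseteq> {w. length w = length es}"
    using length_stem by auto
  show "finite {w :: 'q list. length w = length es}"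
    using finite_lists_length_eq[OF finite_UNIV, of "length es"] by simp
qed

lemma delta_action_stem: "a \<in> stems es \<Longrightarrow> act s a \<in> stems es"
  by (metis stems_eq_comp comp_eq_if_mem delta_action_mem_comp)

lemma stems_connected:
  assumes "a \<in> stems es" and "b \<in> stems es"
  obtains s where "b = act s a"
proof -
  obtain w0 where w0: "stems es = comp delta rho w0"
    by (rule stems_eq_comp)
  then have "b \<in> comp delta rho a"
    using assms comp_eq_if_mem by metis
  then show ?thesis
    using that mem_comp_iff_delta_action[OF reversible] by blast
qed

lemma jword_delta_action:
  assumes "jword delta rho es w"
  shows "jword delta rho es (act s w)"
  using assms by (simp add: jword_def take_delta_action)

lemma stem_rel_delta_action:
  assumes "(a, b) \<in> R"
  shows "(act s a, act s b) \<in> R"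
proof -
  from assms obtain t where a: "a \<in> stems es" and b: "b \<in> stems es"
    and j: "jword delta rho es (a @ t @ b)" and rid: "\<forall>x. rho_states delta rho (a @ t) x = x"
    by (auto simp: stem_rel_def)
  define t' where "t' = act (rho_states delta rho a s) t"
  have at: "act s (a @ t) = act s a @ t'"
    by (simp add: t'_def delta_action_append)
  have "act s ((a @ t) @ b) = act s (a @ t) @ act s b"
    using rid by (simp only: delta_action_append)
  then have "act s (a @ t @ b) = act s a @ t' @ act s b"
    using at by simp
  then have "jword delta rho es (act s a @ t' @ act s b)"
    using jword_delta_action[OF j, of s] by simp
  moreover have "\<forall>x. rho_states delta rho (act s a @ t') x = x"
    using rho_states_id_delta_action[OF rid, of s] at by simp
  ultimately show ?thesis
    using delta_action_stem[OF a] delta_action_stem[OF b] by (auto simp: stem_rel_def)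
qed

text \<open>Prepending \<open>a t\<close> with \<open>\<rho>\<^sub>a\<^sub>t = id\<close> makes \<open>\<delta>\<^sub>s\<close> act on the two parts independently,
  so liftability of the component of \<open>y\<close> to the last trunk edge passes to the new component.\<close>

lemma comp_append_mem_jungle:
  assumes y: "comp delta rho y \<in> jungle delta rho es" "length y > length es"
    and a: "a \<in> stems es" and rid: "\<forall>x. rho_states delta rho (a @ t) x = x"
  shows "comp delta rho (a @ t @ y) \<in> jungle delta rho es"
proof -
  let ?C = "comp delta rho (a @ t @ y)"
  have "comp delta rho y \<notin> set es"
    using length_mem_trunk_edge mem_comp_self y(2) by (metis not_le)
  then have lift_y: "liftable (comp delta rho y) (last es)"
    using y(1) by (simp add: jungle_def)
  have la: "length a = length es"
    using length_stem[OF a] .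
  have "[] \<notin> ?C"
    using length_mem_comp[of "[]" delta rho "a @ t @ y"] la y(2) by auto
  then have "is_edge delta rho ?C"
    by (auto simp: is_edge_def is_vertex_def)
  moreover have "descends ?C (last es)"
    unfolding descends_def
    using mem_comp_self[of "a @ t @ y"] la y(2) a
    by (intro bexI[of _ "a @ t @ y"]) (auto simp: stems_def lev_last_trunk)
  moreover have "liftable ?C (last es)"
    unfolding liftable_def
  proof
    fix z assume "z \<in> ?C"
    then obtain s where "z = act s ((a @ t) @ y)"
      using mem_comp_iff_delta_action[OF reversible] by (metis append_assoc)
    then have z: "z = act s (a @ t) @ act s y"
      using rid by (simp only: delta_action_append)
    obtain p where "suffix p (act s y)" "p \<in> last es"
      using lift_y delta_action_mem_comp[of delta rho s y] by (auto simp: liftable_def)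
    then show "\<exists>p. suffix p z \<and> p \<in> last es"
      using z suffix_appendI by blast
  qed
  ultimately show ?thesis
    by (simp add: jungle_def)
qed

lemma stem_rel_trans:
  assumes "(a, b) \<in> R" and "(b, c) \<in> R"
  shows "(a, c) \<in> R"
proof -
  from assms(1) obtain s where a: "a \<in> stems es"
    and j1: "jword delta rho es (a @ s @ b)" and r1: "\<forall>x. rho_states delta rho (a @ s) x = x"
    by (auto simp: stem_rel_def)
  from assms(2) obtain t where b: "b \<in> stems es" and c: "c \<in> stems es"
    and j2: "jword delta rho es (b @ t @ c)" and r2: "\<forall>x. rho_states delta rho (b @ t) x = x"
    by (auto simp: stem_rel_def)
  have "\<forall>x. rho_states delta rho (a @ (s @ b @ t)) x = x"
    using r1 r2 by (metis append_assoc rho_states_append)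
  moreover have "jword delta rho es (a @ (s @ b @ t) @ c)"
    unfolding jword_def
  proof (intro allI impI)
    fix k assume k: "1 \<le> k \<and> k \<le> length (a @ (s @ b @ t) @ c)"
    show "comp delta rho (take k (a @ (s @ b @ t) @ c)) \<in> jungle delta rho es"
    proof (cases "k \<le> length (a @ s @ b)")
      case True
      then show ?thesis
        using j1 k by (simp add: jword_def)
    next
      case False
      define j where "j = k - length (a @ s)"
      have j: "length es < j" "j \<le> length (b @ t @ c)"
        using False k length_stem[OF b] by (auto simp: j_def)
      then have "comp delta rho (take j (b @ t @ c)) \<in> jungle delta rho es"
        using j2 unfolding jword_def by simp
      then have "comp delta rho (a @ s @ take j (b @ t @ c)) \<in> jungle delta rho es"
        using comp_append_mem_jungle a r1 j by simp
      moreover have "take k (a @ (s @ b @ t) @ c) = a @ s @ take j (b @ t @ c)"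
        using False by (simp add: j_def)
      ultimately show ?thesis
        by simp
    qed
  qed
  ultimately show ?thesis
    using a c unfolding stem_rel_def by blast
qed

text \<open>Returning along a cycle of \<open>\<delta>\<^sub>s\<close> gives symmetry; the period is doubled so that the
  cycle has length at least two and reflexivity of \<open>\<sim>\<close> is never needed.\<close>

lemma stem_rel_sym:
  assumes ab: "(a, b) \<in> R"
  shows "(b, a) \<in> R"
proof -
  have "a \<in> stems es" and "b \<in> stems es"
    using ab by (auto simp: stem_rel_def)
  then obtain s where b: "b = act s a"
    by (rule stems_connected)
  let ?h = "act s"
  have orbit: "(a, (?h ^^ m) a) \<in> R" if "m > 0" for m
    using that
  proof (induction m rule: nat_induct_non_zero)
    case 1
    then show ?case using ab b by simp
  next
    case (Suc m)
    have "(?h a, ?h ((?h ^^ m) a)) \<in> R"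
      using Suc.IH by (rule stem_rel_delta_action)
    then show ?case
      using ab b stem_rel_trans by auto
  qed
  have "inj ?h"
    using inj_delta by (rule inj_delta_action)
  then obtain n where n: "n > 0" "(?h ^^ n) a = a"
    by (rule funpow_length_preserving_returns) simp
  have "(?h ^^ Suc (2 * n - 1)) a = a"
    using n by (simp add: mult_2 funpow_add)
  moreover have "(?h a, ?h ((?h ^^ (2 * n - 1)) a)) \<in> R"
    using orbit n(1) by (intro stem_rel_delta_action) simp
  ultimately show ?thesis
    using b by simp
qed

lemma stem_rel_Image_eq:
  assumes "(x, v) \<in> R"
  shows "R `` {v} = R `` {x}"
  using assms stem_rel_sym stem_rel_trans by blast

lemma M_count_le:
  assumes v: "v \<in> stems es" "prefix u v"
    and v': "v' \<in> stems es" "prefix u' v'"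
    and len: "length u' = length u"
  shows "M_count u (R `` {v}) \<le> M_count u' (R `` {v'})"
proof -
  obtain s where h: "v' = act s v"
    using v(1) v'(1) by (rule stems_connected)
  let ?h = "act s"
  have "prefix (?h u) v'"
    using prefix_delta_action[OF v(2)] h by simp
  then have hu: "?h u = u'"
    using v'(2) len by (metis append_eq_conv_conj length_delta_action prefix_def)
  have "inj ?h"
    using inj_delta by (rule inj_delta_action)
  then have "inj_on ?h {z \<in> R `` {v}. prefix u z}"
    by (rule inj_on_subset) simp
  moreover have "?h ` {z \<in> R `` {v}. prefix u z} \<subseteq> {z \<in> R `` {v'}. prefix u' z}"
    using stem_rel_delta_action[of v _ s] prefix_delta_action[of u _ delta rho s] h hu by auto
  moreover have "finite {z \<in> R `` {v'}. prefix u' z}"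
    using finite_stems by (rule rev_finite_subset) (auto simp: stem_rel_def)
  ultimately show ?thesis
    unfolding M_count_def by (rule card_inj_on_le)
qed

lemma class_eq_Image_if_prefix:
  assumes "\<gamma> \<in> stems es // R" and "M_count u \<gamma> \<noteq> 0"
  obtains v where "v \<in> stems es" "prefix u v" "\<gamma> = R `` {v}"
proof -
  obtain v where v: "v \<in> \<gamma>" "prefix u v"
    using assms(2) unfolding M_count_def by (metis (no_types, lifting) Collect_empty_eq card.empty)
  obtain x where x: "\<gamma> = R `` {x}"
    using assms(1) by (auto simp: quotient_def)
  then have xv: "(x, v) \<in> R"
    using v(1) by simp
  show ?thesis
  proof
    show "v \<in> stems es"
      using xv by (simp add: stem_rel_def)
    show "\<gamma> = R `` {v}"
      using x stem_rel_Image_eq[OF xv] by simp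
  qed (fact v(2))
qed

lemma M_count_eq:
  assumes "\<gamma> \<in> stems es // R" "M_count u \<gamma> \<noteq> 0"
    and "\<gamma>' \<in> stems es // R" "M_count u' \<gamma>' \<noteq> 0"
    and "length u' = length u"
  shows "M_count u \<gamma> = M_count u' \<gamma>'"
proof -
  obtain v where v: "v \<in> stems es" "prefix u v" "\<gamma> = R `` {v}"
    using assms(1,2) by (rule class_eq_Image_if_prefix)
  obtain v' where v': "v' \<in> stems es" "prefix u' v'" "\<gamma>' = R `` {v'}"
    using assms(3,4) by (rule class_eq_Image_if_prefix)
  show ?thesis
    using M_count_le[OF v(1,2) v'(1,2) assms(5)] M_count_le[OF v'(1,2) v(1,2) assms(5)[symmetric]] v(3) v'(3)
    by simp
qed

end

theorem proposition5p17:
  fixes delta :: "'s::finite \<Rightarrow> 'q::finite \<Rightarrow> 'q"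
    and rho :: "'q \<Rightarrow> 's \<Rightarrow> 's"
    and es :: "'q list set list"
  assumes conn: "connected_automaton delta rho"
    and birev: "bireversible delta rho"
    and no_active: "\<And>B. is_branch delta rho B \<Longrightarrow> active_branch delta rho B \<Longrightarrow>
                          \<not> self_liftable delta rho (branch_edges B)"
    and trunk: "jungle_trunk delta rho es"
    and n_def: "n = length es"
    and u: "jword delta rho es u" "length u < n"
    and u': "jword delta rho es u'" "length u' = length u"
    and gamma: "\<gamma> \<in> stems es // stem_rel delta rho es"
    and gamma': "\<gamma>' \<in> stems es // stem_rel delta rho es"
    and nz: "M_count u \<gamma> \<noteq> 0" "M_count u' \<gamma>' \<noteq> 0"
  shows "M_count u \<gamma> = M_count u' \<gamma>'"
proof -
  interpret reversible_jungle delta rho es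
    using birev trunk by unfold_locales (simp_all add: bireversible_def)
  show ?thesis
    using gamma nz(1) gamma' nz(2) u'(2) by (rule M_count_eq)
qed

end
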